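(* Let $A_q$ be the set of polynomials $F\in\mathbb{Q}(q)[x]$ such that $F([n]_q)\in\mathbb{Z}[q,q^{-1}]$ for all integers $n\ge0$. For $k\ge0$ let $$B_k(x)=\frac{\prod_{j=1}^{k}\big([j]_q+q^jx\big)}{[k]!_q}.$$ Then the polynomials $B_k$, $k\ge0$, form a basis of $A_q$ as a module over $\mathbb{Z}[q,q^{-1}]$.
   Context: $q$ is an indeterminate; $[n]_q=(q^n-1)/(q-1)$ for $n\in\mathbb{Z}$ and $[k]!_q=[1]_q\cdots[k]_q$ (with $[0]!_q=1$). *)

theory Defs
  imports "HOL-Computational_Algebra.Polynomial" "HOL-Computational_Algebra.Fraction_Field"
begin

type_synonym qfun = "rat poly fract"

definition qvar :: qfun where
  "qvar = Fract [:0, 1:] 1"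

definition qint :: "int \<Rightarrow> qfun" where
  "qint n = (qvar powi n - 1) / (qvar - 1)"

definition qfact :: "nat \<Rightarrow> qfun" where
  "qfact k = (\<Prod>j=1..k. qint (int j))"

definition laurent :: "qfun set" where
  "laurent = {Fract (map_poly of_int p) 1 / qvar ^ m | (p :: int poly) m. True}"

definition Aq :: "qfun poly set" where
  "Aq = {F. \<forall>n::nat. poly F (qint (int n)) \<in> laurent}"

definition Bq :: "nat \<Rightarrow> qfun poly" where
  "Bq k = smult (inverse (qfact k))
            (\<Prod>j=1..k. [: qint (int j), qvar ^ j :])"

end

theory Submission
  imports Defs
begin

(*
  B_k([n]_q) is the Gaussian binomial coefficient [n+k choose k]_q, a Laurent polynomial by the
  q-Pascal rule. As deg B_k = k, every F has a unique expansion in the B_k over Q(q); for F in A_q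
  of degree at most d it remains to see that its B_d-coefficient F_d / lc(B_d), where F_d is the
  coefficient of x^d, is a Laurent polynomial, and then to induct on the degree of F - c B_d.

  Substituting x = (y - 1)/(q - 1) gives F([n]_q) = A(q^n) for a polynomial A, so n |-> F([n]_q)
  is a sum of exponentials a_i q^(i n) with a_d = F_d / (q - 1)^d. The operator
  s(n) |-> s(n+1) - q^k s(n) preserves Laurent-valued sequences and multiplies q^(i n) by
  q^i - q^k. Applying it for k = 0, ..., d-1 and evaluating at n = 0 leaves only
  a_d prod_{a<d} (q^d - q^a), which equals q^(d^2) F_d / lc(B_d).
*)

lemma qvar_power_neq_1:
  assumes "n > 0"
  shows "qvar ^ n \<noteq> 1"
proof
  have qvar_power: "qvar ^ m = Fract ([:0, 1:] ^ m) 1" for m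
    by (induction m) (simp_all add: qvar_def One_fract_def)
  assume "qvar ^ n = 1"
  then have "([:0, 1:] :: rat poly) ^ n = 1"
    by (simp add: qvar_power One_fract_def eq_fract)
  then have "degree (([:0, 1:] :: rat poly) ^ n) = 0"
    by simp
  with assms show False
    by (simp add: degree_power_eq)
qed

lemma qvar_neq_0 [simp]: "qvar \<noteq> 0"
  using qvar_power_neq_1[of 1] by (auto simp: qvar_def Zero_fract_def eq_fract)

lemma qvar_neq_1 [simp]: "qvar \<noteq> 1"
  using qvar_power_neq_1[of 1] by simp

definition int_poly_fract :: "int poly \<Rightarrow> qfun" where
  "int_poly_fract p = Fract (map_poly of_int p) 1"

lemma int_poly_fract_add: "int_poly_fract (p + r) = int_poly_fract p + int_poly_fract r"
proof -
  have "map_poly (of_int :: int \<Rightarrow> rat) (p + r) = map_poly of_int p + map_poly of_int r"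
    by (rule poly_eqI) (simp add: coeff_map_poly)
  then show ?thesis
    by (simp add: int_poly_fract_def)
qed

lemma int_poly_fract_uminus: "int_poly_fract (- p) = - int_poly_fract p"
proof -
  have "map_poly (of_int :: int \<Rightarrow> rat) (- p) = - map_poly of_int p"
    by (rule poly_eqI) (simp add: coeff_map_poly)
  then show ?thesis
    by (simp add: int_poly_fract_def)
qed

lemma int_poly_fract_mult: "int_poly_fract (p * r) = int_poly_fract p * int_poly_fract r"
proof -
  have "map_poly (of_int :: int \<Rightarrow> rat) (p * r) = map_poly of_int p * map_poly of_int r"
    by (rule poly_eqI) (simp add: coeff_map_poly coeff_mult)
  then show ?thesis
    by (simp add: int_poly_fract_def)
qed

lemma int_poly_fract_X_power: "int_poly_fract ([:0, 1:] ^ m) = qvar ^ m"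
proof (induction m)
  case 0
  then show ?case
    by (simp add: int_poly_fract_def One_fract_def)
next
  case (Suc m)
  have "int_poly_fract [:0, 1:] = qvar"
    by (simp add: int_poly_fract_def qvar_def map_poly_pCons)
  with Suc show ?case
    by (simp only: power_Suc int_poly_fract_mult)
qed

lemma laurent_iff: "x \<in> laurent \<longleftrightarrow> (\<exists>p m. x = int_poly_fract p / qvar ^ m)"
  by (auto simp: laurent_def int_poly_fract_def)

lemma laurent_add [intro]:
  assumes "x \<in> laurent" "y \<in> laurent"
  shows "x + y \<in> laurent"
proof -
  obtain p m r k where x: "x = int_poly_fract p / qvar ^ m" and y: "y = int_poly_fract r / qvar ^ k"
    using assms by (auto simp: laurent_iff)
  have "x + y = int_poly_fract (p * [:0, 1:] ^ k + r * [:0, 1:] ^ m) / qvar ^ (m + k)"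
    by (simp add: x y int_poly_fract_add int_poly_fract_mult int_poly_fract_X_power
        field_simps power_add)
  then show ?thesis
    by (auto simp: laurent_iff)
qed

lemma laurent_mult [intro]:
  assumes "x \<in> laurent" "y \<in> laurent"
  shows "x * y \<in> laurent"
proof -
  obtain p m r k where x: "x = int_poly_fract p / qvar ^ m" and y: "y = int_poly_fract r / qvar ^ k"
    using assms by (auto simp: laurent_iff)
  have "x * y = int_poly_fract (p * r) / qvar ^ (m + k)"
    by (simp add: x y int_poly_fract_mult power_add)
  then show ?thesis
    by (auto simp: laurent_iff)
qed

lemma laurent_uminus [intro]:
  assumes "x \<in> laurent"
  shows "- x \<in> laurent"
proof -
  obtain p m where "x = int_poly_fract p / qvar ^ m"
    using assms by (auto simp: laurent_iff)
  then have "- x = int_poly_fract (- p) / qvar ^ m"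
    by (simp add: int_poly_fract_uminus)
  then show ?thesis
    by (auto simp: laurent_iff)
qed

lemma laurent_diff [intro]: "x \<in> laurent \<Longrightarrow> y \<in> laurent \<Longrightarrow> x - y \<in> laurent"
  using laurent_add[of x "- y"] by auto

lemma laurent_divide_qvar_power [intro]:
  assumes "x \<in> laurent"
  shows "x / qvar ^ k \<in> laurent"
proof -
  obtain p m where "x = int_poly_fract p / qvar ^ m"
    using assms by (auto simp: laurent_iff)
  then have "x / qvar ^ k = int_poly_fract p / qvar ^ (m + k)"
    by (simp add: power_add)
  then show ?thesis
    by (auto simp: laurent_iff)
qed

lemma laurent_qvar_power [intro]: "qvar ^ k \<in> laurent"
  unfolding laurent_iff by (rule exI[of _ "[:0, 1:] ^ k"], rule exI[of _ 0]) (simp add: int_poly_fract_X_power)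

lemma laurent_1 [intro]: "1 \<in> laurent"
  using laurent_qvar_power[of 0] by simp

lemma laurent_0 [intro]: "0 \<in> laurent"
  using laurent_diff[OF laurent_1 laurent_1] by simp

lemma qint_of_nat: "qint (int n) = (qvar ^ n - 1) / (qvar - 1)"
  by (simp add: qint_def)

lemma qint_add: "qint (int (a + b)) = qint (int a) + qvar ^ a * qint (int b)"
proof -
  have "qvar ^ (a + b) - 1 = (qvar ^ a - 1) + qvar ^ a * (qvar ^ b - 1)"
    by (simp add: power_add algebra_simps)
  then show ?thesis
    unfolding qint_of_nat by (simp only: add_divide_distrib times_divide_eq_right)
qed

lemma qint_neq_0: "n > 0 \<Longrightarrow> qint (int n) \<noteq> 0"
  using qvar_power_neq_1[of n] by (simp add: qint_of_nat)

lemma qfact_Suc: "qfact (Suc k) = qfact k * qint (int (Suc k))"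
  by (simp add: qfact_def prod.cl_ivl_Suc)

lemma qfact_neq_0: "qfact k \<noteq> 0"
  using qint_neq_0 by (auto simp: qfact_def)

lemma poly_Bq_qint: "poly (Bq k) (qint (int n)) = (\<Prod>j=1..k. qint (int (n + j))) / qfact k"
proof -
  have "(\<Prod>j=1..k. qint (int j) + qvar ^ j * qint (int n)) = (\<Prod>j=1..k. qint (int (n + j)))"
    by (intro prod.cong refl) (metis qint_add add.commute)
  then show ?thesis
    by (simp add: Bq_def poly_prod field_simps)
qed

lemma poly_Bq_qint_pascal:
  "poly (Bq (Suc k)) (qint (int (Suc n))) =
     qvar ^ Suc k * poly (Bq (Suc k)) (qint (int n)) + poly (Bq k) (qint (int (Suc n)))"
proof -
  define g where "g j = qint (int j)" for j
  define P where "P = (\<Prod>j=1..k. g (Suc n + j))"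
  have closed_form: "poly (Bq m) (qint (int i)) = (\<Prod>j=1..m. g (i + j)) / qfact m" for m i
    unfolding g_def by (rule poly_Bq_qint)
  have top: "(\<Prod>j=1..Suc k. g (Suc n + j)) = P * g (Suc k + Suc n)"
    by (simp add: P_def prod.cl_ivl_Suc add.commute)
  have "(\<Prod>j=1..Suc k. g (n + j)) = g (Suc n) * (\<Prod>j=Suc 1..Suc k. g (n + j))"
    by (simp add: prod.atLeast_Suc_atMost)
  also have "(\<Prod>j=Suc 1..Suc k. g (n + j)) = P"
    unfolding P_def prod.shift_bounds_cl_Suc_ivl by simp
  finally have bottom: "(\<Prod>j=1..Suc k. g (n + j)) = g (Suc n) * P" .
  have split: "g (Suc k + Suc n) = g (Suc k) + qvar ^ Suc k * g (Suc n)"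
    unfolding g_def by (rule qint_add)
  have qfact_Suc_k: "qfact (Suc k) = qfact k * g (Suc k)"
    unfolding g_def by (rule qfact_Suc)
  have "g (Suc k) \<noteq> 0"
    unfolding g_def by (rule qint_neq_0) simp
  with qfact_neq_0[of k] show ?thesis
    unfolding closed_form top bottom P_def[symmetric] qfact_Suc_k split
    by (simp add: field_simps)
qed

lemma poly_Bq_qint_laurent: "poly (Bq k) (qint (int n)) \<in> laurent"
proof (induction k arbitrary: n)
  case 0
  then show ?case
    by (simp add: Bq_def qfact_def laurent_1)
next
  case (Suc k)
  note IH_k = Suc.IH
  show ?case
  proof (induction n)
    case 0
    then show ?case
      using poly_Bq_qint[of "Suc k" 0] qfact_neq_0[of "Suc k"] by (simp add: qfact_def laurent_1)
  next
    case (Suc n)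
    then show ?case
      unfolding poly_Bq_qint_pascal using IH_k by blast
  qed
qed

lemma Bq_in_Aq: "Bq k \<in> Aq"
  by (simp add: Aq_def poly_Bq_qint_laurent)

lemma degree_Bq: "degree (Bq k) = k"
  and coeff_Bq_self: "coeff (Bq k) k = (\<Prod>j=1..k. qvar ^ j) / qfact k"
proof -
  let ?P = "\<Prod>j=1..k. [: qint (int j), qvar ^ j :]"
  have "degree ?P = k"
    by (subst degree_prod_eq_sum_degree) auto
  moreover have "lead_coeff ?P = (\<Prod>j=1..k. qvar ^ j)"
    unfolding lead_coeff_prod by simp
  ultimately show "degree (Bq k) = k" "coeff (Bq k) k = (\<Prod>j=1..k. qvar ^ j) / qfact k"
    using qfact_neq_0[of k] by (simp_all add: Bq_def field_simps)
qed

lemma coeff_Bq_self_neq_0: "coeff (Bq k) k \<noteq> 0"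
  using qfact_neq_0[of k] by (simp add: coeff_Bq_self)

lemma coeff_Bq_self_mult_prod:
  "coeff (Bq d) d * (\<Prod>a<d. qvar ^ d - qvar ^ a) = qvar ^ (d * d) * (qvar - 1) ^ d"
proof (induction d)
  case 0
  then show ?case
    by (simp add: coeff_Bq_self qfact_def)
next
  case (Suc d)
  have "(\<Prod>a<Suc d. qvar ^ Suc d - qvar ^ a) =
          (qvar ^ Suc d - 1) * (\<Prod>a<d. qvar * (qvar ^ d - qvar ^ a))"
    unfolding prod.lessThan_Suc_shift by (simp add: right_diff_distrib)
  also have "\<dots> = (qvar - 1) * qint (int (Suc d)) * qvar ^ d * (\<Prod>a<d. qvar ^ d - qvar ^ a)"
    unfolding qint_of_nat by (simp add: prod.distrib)
  finally have prod_Suc: "(\<Prod>a<Suc d. qvar ^ Suc d - qvar ^ a) =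
      (qvar - 1) * qint (int (Suc d)) * qvar ^ d * (\<Prod>a<d. qvar ^ d - qvar ^ a)" .
  have coeff_Suc: "coeff (Bq (Suc d)) (Suc d) = coeff (Bq d) d * qvar ^ Suc d / qint (int (Suc d))"
    by (simp add: coeff_Bq_self qfact_Suc prod.cl_ivl_Suc)
  have "qint (int (Suc d)) \<noteq> 0"
    by (rule qint_neq_0) simp
  then have "coeff (Bq (Suc d)) (Suc d) * (\<Prod>a<Suc d. qvar ^ Suc d - qvar ^ a) =
      qvar ^ Suc d * qvar ^ d * (qvar - 1) * (coeff (Bq d) d * (\<Prod>a<d. qvar ^ d - qvar ^ a))"
    unfolding prod_Suc coeff_Suc by (simp add: field_simps)
  also have "\<dots> = qvar ^ (Suc d + d + d * d) * (qvar - 1) ^ Suc d"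
    unfolding Suc.IH by (simp add: mult_ac power_add)
  also have "Suc d + d + d * d = Suc d * Suc d"
    by simp
  finally show ?case .
qed

fun iterated_qdiff :: "nat \<Rightarrow> (nat \<Rightarrow> qfun) \<Rightarrow> nat \<Rightarrow> qfun" where
  "iterated_qdiff 0 s = s"
| "iterated_qdiff (Suc k) s = (\<lambda>n. iterated_qdiff k s (Suc n) - qvar ^ k * iterated_qdiff k s n)"

lemma iterated_qdiff_laurent: "(\<And>n. s n \<in> laurent) \<Longrightarrow> iterated_qdiff k s n \<in> laurent"
  by (induction k arbitrary: n) auto

lemma iterated_qdiff_exp_sum:
  "iterated_qdiff k (\<lambda>n. \<Sum>i\<le>d. \<alpha> i * (qvar ^ i) ^ n) =
     (\<lambda>n. \<Sum>i\<le>d. \<alpha> i * (\<Prod>a<k. qvar ^ i - qvar ^ a) * (qvar ^ i) ^ n)"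
  by (induction k) (simp_all add: fun_eq_iff sum_subtractf[symmetric] sum_distrib_left algebra_simps)

lemma exp_sum_top_coeff:
  "(\<Sum>i\<le>d. \<alpha> i * (\<Prod>a<d. qvar ^ i - qvar ^ a)) = \<alpha> d * (\<Prod>a<d. qvar ^ d - qvar ^ a)"
proof -
  have "(\<Sum>i<d. \<alpha> i * (\<Prod>a<d. qvar ^ i - qvar ^ a)) = 0"
    by (rule sum.neutral) (auto intro!: prod_zero)
  then show ?thesis
    by (simp flip: lessThan_Suc_atMost)
qed

lemma poly_qint_exp_sum:
  assumes "degree F \<le> d"
  obtains \<alpha> where "\<alpha> d = coeff F d / (qvar - 1) ^ d"
    and "\<And>n. poly F (qint (int n)) = (\<Sum>i\<le>d. \<alpha> i * (qvar ^ i) ^ n)"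
proof -
  define L where "L = [: - 1 / (qvar - 1), 1 / (qvar - 1) :]"
  define A where "A = F \<circ>\<^sub>p L"
  have degree_L: "degree L = 1"
    by (simp add: L_def)
  then have degree_A: "degree A = degree F"
    by (simp add: A_def degree_pcompose)
  have "coeff A d = coeff F d / (qvar - 1) ^ d"
  proof (cases "degree F = d")
    case True
    then show ?thesis
      using lead_coeff_comp[of L F] degree_L degree_A
      by (simp add: A_def L_def power_one_over)
  next
    case False
    with assms degree_A show ?thesis
      by (simp add: coeff_eq_0)
  qed
  moreover have "poly F (qint (int n)) = (\<Sum>i\<le>d. coeff A i * (qvar ^ i) ^ n)" for n
  proof -
    have "poly L (qvar ^ n) = qint (int n)"
      by (simp add: L_def qint_of_nat diff_divide_distrib)
    then have "poly F (qint (int n)) = poly A (qvar ^ n)"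
      by (simp add: A_def poly_pcompose)
    also have "\<dots> = poly (\<Sum>i\<le>d. monom (coeff A i) i) (qvar ^ n)"
      using assms degree_A by (simp add: poly_as_sum_of_monoms')
    finally show ?thesis
      by (simp add: poly_sum poly_monom power_mult[symmetric] mult.commute)
  qed
  ultimately show ?thesis
    using that by blast
qed

lemma coeff_div_coeff_Bq_laurent:
  assumes "F \<in> Aq" and "degree F \<le> d"
  shows "coeff F d / coeff (Bq d) d \<in> laurent"
proof -
  obtain \<alpha> where top: "\<alpha> d = coeff F d / (qvar - 1) ^ d"
    and exp_sum: "\<And>n. poly F (qint (int n)) = (\<Sum>i\<le>d. \<alpha> i * (qvar ^ i) ^ n)"
    using poly_qint_exp_sum[OF assms(2)] by blast
  have "iterated_qdiff d (\<lambda>n. poly F (qint (int n))) 0 \<in> laurent"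
    using assms(1) by (intro iterated_qdiff_laurent) (simp add: Aq_def)
  also have "iterated_qdiff d (\<lambda>n. poly F (qint (int n))) 0 = \<alpha> d * (\<Prod>a<d. qvar ^ d - qvar ^ a)"
    by (simp add: exp_sum iterated_qdiff_exp_sum exp_sum_top_coeff)
  finally have "\<alpha> d * (\<Prod>a<d. qvar ^ d - qvar ^ a) / qvar ^ (d * d) \<in> laurent"
    by blast
  moreover have "coeff F d / coeff (Bq d) d = \<alpha> d * (\<Prod>a<d. qvar ^ d - qvar ^ a) / qvar ^ (d * d)"
    using coeff_Bq_self_mult_prod[of d] coeff_Bq_self_neq_0[of d]
    by (simp add: top field_simps)
  ultimately show ?thesis
    by simp
qed

lemma Aq_diff_smult_Bq: "F \<in> Aq \<Longrightarrow> c \<in> laurent \<Longrightarrow> F - smult c (Bq k) \<in> Aq"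
  using Bq_in_Aq[of k] by (auto simp: Aq_def)

lemma coeff_Bq_eq_0: "k < i \<Longrightarrow> coeff (Bq k) i = 0"
  by (simp add: coeff_eq_0 degree_Bq)

lemma Aq_Bq_expansion_exists:
  assumes "F \<in> Aq" and "\<forall>i\<ge>N. coeff F i = 0"
  shows "\<exists>c. (\<forall>k. c k \<in> laurent) \<and> (\<forall>k\<ge>N. c k = 0) \<and> F = (\<Sum>k<N. smult (c k) (Bq k))"
  using assms
proof (induction N arbitrary: F)
  case 0
  then have "F = 0"
    by (simp add: poly_eq_iff)
  then show ?case
    by (intro exI[of _ "\<lambda>_. 0"]) auto
next
  case (Suc N)
  define t where "t = coeff F N / coeff (Bq N) N"
  have "degree F \<le> N"
    using Suc.prems(2) by (intro degree_le) auto
  then have t_laurent: "t \<in> laurent"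
    unfolding t_def using Suc.prems(1) by (rule coeff_div_coeff_Bq_laurent[rotated])
  have "coeff (F - smult t (Bq N)) i = 0" if "N \<le> i" for i
  proof (cases "i = N")
    case True
    then show ?thesis
      using coeff_Bq_self_neq_0[of N] by (simp add: t_def)
  next
    case False
    with that Suc.prems(2) show ?thesis
      by (simp add: coeff_Bq_eq_0)
  qed
  then obtain c where c: "\<forall>k. c k \<in> laurent" "\<forall>k\<ge>N. c k = 0"
    and expansion: "F - smult t (Bq N) = (\<Sum>k<N. smult (c k) (Bq k))"
    using Suc.IH Aq_diff_smult_Bq[OF Suc.prems(1) t_laurent] by blast
  have "(\<Sum>k<N. smult ((c(N := t)) k) (Bq k)) = (\<Sum>k<N. smult (c k) (Bq k))"
    by (intro sum.cong) auto
  then have "F = (\<Sum>k<Suc N. smult ((c(N := t)) k) (Bq k))"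
    using expansion by (simp add: algebra_simps)
  with c t_laurent show ?case
    by (intro exI[of _ "c(N := t)"]) auto
qed

lemma Bq_linear_independent:
  assumes "(\<Sum>k<N. smult (a k) (Bq k)) = 0" and "\<forall>k\<ge>N. a k = 0"
  shows "a = (\<lambda>_. 0)"
  using assms
proof (induction N)
  case 0
  then show ?case
    by auto
next
  case (Suc N)
  have "coeff (\<Sum>k<N. smult (a k) (Bq k)) N = 0"
    by (simp add: coeff_sum coeff_Bq_eq_0)
  then have "a N * coeff (Bq N) N = 0"
    using arg_cong[OF Suc.prems(1), of "\<lambda>p. coeff p N"] by simp
  then have "a N = 0"
    using coeff_Bq_self_neq_0[of N] by simp
  have "\<forall>k\<ge>N. a k = 0"
  proof (intro allI impI)
    fix k
    assume "N \<le> k"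
    with \<open>a N = 0\<close> Suc.prems(2) show "a k = 0"
      by (cases "k = N") auto
  qed
  with Suc.prems(1) \<open>a N = 0\<close> show ?case
    by (intro Suc.IH) simp_all
qed

lemma Bq_expansion_unique:
  assumes c: "\<forall>k\<ge>N. c k = 0" and c': "\<forall>k\<ge>M. c' k = 0"
    and eq: "(\<Sum>k<N. smult (c k) (Bq k)) = (\<Sum>k<M. smult (c' k) (Bq k))"
  shows "c = c'"
proof -
  have extend: "(\<Sum>k<K. smult (b k) (Bq k)) = (\<Sum>k<N + M. smult (b k) (Bq k))"
    if "\<forall>k\<ge>K. b k = 0" "K \<le> N + M" for b K
    using that by (intro sum.mono_neutral_left) auto
  have "(\<Sum>k<N + M. smult (c k - c' k) (Bq k)) = 0"
    using eq extend[OF c] extend[OF c'] by (simp add: smult_diff_left sum_subtractf)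
  then have "(\<lambda>k. c k - c' k) = (\<lambda>_. 0)"
    using c c' by (intro Bq_linear_independent) auto
  then show ?thesis
    by (simp add: fun_eq_iff)
qed

theorem mainTheorem10:
  shows "(\<forall>k. Bq k \<in> Aq) \<and>
         (\<forall>F \<in> Aq. \<exists>!c :: nat \<Rightarrow> qfun.
             (\<forall>k. c k \<in> laurent) \<and>
             (\<exists>N. (\<forall>k\<ge>N. c k = 0) \<and> F = (\<Sum>k<N. smult (c k) (Bq k))))"
proof (intro conjI allI ballI ex_ex1I)
  show "Bq k \<in> Aq" for k
    by (rule Bq_in_Aq)
  fix F assume F: "F \<in> Aq"
  have "\<forall>i\<ge>Suc (degree F). coeff F i = 0"
    by (simp add: coeff_eq_0)
  with Aq_Bq_expansion_exists[OF F this]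
  show "\<exists>c. (\<forall>k. c k \<in> laurent) \<and> (\<exists>N. (\<forall>k\<ge>N. c k = 0) \<and> F = (\<Sum>k<N. smult (c k) (Bq k)))"
    by blast
  fix c c'
  assume "(\<forall>k. c k \<in> laurent) \<and> (\<exists>N. (\<forall>k\<ge>N. c k = 0) \<and> F = (\<Sum>k<N. smult (c k) (Bq k)))"
    and "(\<forall>k. c' k \<in> laurent) \<and> (\<exists>N. (\<forall>k\<ge>N. c' k = 0) \<and> F = (\<Sum>k<N. smult (c' k) (Bq k)))"
  then obtain N M where "\<forall>k\<ge>N. c k = 0" "F = (\<Sum>k<N. smult (c k) (Bq k))"
    and "\<forall>k\<ge>M. c' k = 0" "F = (\<Sum>k<M. smult (c' k) (Bq k))"
    by blast
  then show "c = c'"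
    using Bq_expansion_unique[of N c M c'] by simp
qed

end
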